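(* Let $\Sigma$ be a closed Riemann surface of genus $g>1$ equipped with a smooth conformal background metric $h$, and let $U_0$ be a holomorphic cubic differential on $\Sigma$ which is not identically zero. For $\lambda>0$ let $u=u_\lambda$ be the solution of $$\Delta u+4e^{-2u}\|U\|^2-2e^u-2\kappa=0$$ for $U=\lambda U_0$, where $\Delta$, $\|\cdot\|$ and $\kappa$ are the Laplacian, pointwise norm and Gauss curvature of $h$. Let $K$ be a compact subset of $\Sigma$ containing no zero of $U_0$. Then there is a constant $C=C(\Sigma,U_0,K)$ such that on $K$ $$\tfrac12\ \ge\ \|U\|^2e^{-3u_\lambda}\ \ge\ \tfrac12-C\lambda^{-2/3}.$$
   Context: The quantity $\|U\|^2_h e^{-3u}$ equals $|U|^2/(e^uh)^3$, the pointwise norm squared of $U$ with respect to the metric $e^{u}h$. The Laplacian is the nonnegative-spectrum-sign convention in which, for $h=|dz|^2$ locally, $\Delta=4\partial_z\partial_{\bar z}$, so that with $e^uh=e^\psi|dz|^2$ and $U=U(z)dz^3$ the equation reads $\psi_{z\bar z}+|U|^2e^{-2\psi}-\tfrac12 e^\psi=0$. *)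

theory Defs
  imports "HOL-Homology.Homology" "HOL-Complex_Analysis.Complex_Analysis"
begin

text \<open>All local objects (metric density,
cubic differential) are given by their local expressions in each chart of the atlas,
subject to the usual transformation laws.\<close>

type_synonym 'a chart = "'a set \<times> ('a \<Rightarrow> complex)"

definition transition :: "'a chart \<Rightarrow> 'a chart \<Rightarrow> complex \<Rightarrow> complex" where
  "transition c d = snd d \<circ> inv_into (fst c) (snd c)"

definition riemann_surface :: "'a topology \<Rightarrow> 'a chart set \<Rightarrow> bool" where
  "riemann_surface X A \<longleftrightarrow>
     compact_space X \<and> Hausdorff_space X \<and> connected_space X \<and> topspace X \<noteq> {} \<and>
     (\<Union>c\<in>A. fst c) = topspace X \<and>
     (\<forall>(U,\<phi>)\<in>A. openin X U \<and> open (\<phi> ` U) \<and>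
        homeomorphic_map (subtopology X U) (top_of_set (\<phi> ` U)) \<phi>) \<and>
     (\<forall>c\<in>A. \<forall>d\<in>A. transition c d holomorphic_on (snd c ` (fst c \<inter> fst d)))"

definition has_genus :: "'a topology \<Rightarrow> nat \<Rightarrow> bool" where
  "has_genus X g \<longleftrightarrow> homology_group 1 X \<cong> free_Abelian_group {..<2*g}"

definition dx :: "(complex \<Rightarrow> real) \<Rightarrow> complex \<Rightarrow> real" where
  "dx f z = deriv (\<lambda>t::real. f (z + complex_of_real t)) 0"
definition dy :: "(complex \<Rightarrow> real) \<Rightarrow> complex \<Rightarrow> real" where
  "dy f z = deriv (\<lambda>t::real. f (z + \<i> * complex_of_real t)) 0"
definition lap0 :: "(complex \<Rightarrow> real) \<Rightarrow> complex \<Rightarrow> real" where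
  "lap0 f z = dx (dx f) z + dy (dy f) z"

fun Ck :: "nat \<Rightarrow> complex set \<Rightarrow> (complex \<Rightarrow> real) \<Rightarrow> bool" where
  "Ck 0 S f = continuous_on S f"
| "Ck (Suc k) S f = ((\<forall>z\<in>S. f differentiable (at z)) \<and> Ck k S (dx f) \<and> Ck k S (dy f))"

definition smooth_on :: "complex set \<Rightarrow> (complex \<Rightarrow> real) \<Rightarrow> bool" where
  "smooth_on S f \<longleftrightarrow> (\<forall>k. Ck k S f)"

text \<open>A smooth conformal metric h: in the chart c it is rho c z |dz|^2.\<close>
definition conformal_metric :: "'a chart set \<Rightarrow> ('a chart \<Rightarrow> complex \<Rightarrow> real) \<Rightarrow> bool" where
  "conformal_metric A rho \<longleftrightarrow>
     (\<forall>c\<in>A. smooth_on (snd c ` fst c) (rho c) \<and> (\<forall>z\<in>snd c ` fst c. rho c z > 0)) \<and>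
     (\<forall>c\<in>A. \<forall>d\<in>A. \<forall>z\<in>snd c ` (fst c \<inter> fst d).
        rho c z = rho d (transition c d z) * (cmod (deriv (transition c d) z))\<^sup>2)"

text \<open>A holomorphic cubic differential: in the chart c it is U c z dz^3.\<close>
definition holo_cubic_diff :: "'a chart set \<Rightarrow> ('a chart \<Rightarrow> complex \<Rightarrow> complex) \<Rightarrow> bool" where
  "holo_cubic_diff A U \<longleftrightarrow>
     (\<forall>c\<in>A. U c holomorphic_on (snd c ` fst c)) \<and>
     (\<forall>c\<in>A. \<forall>d\<in>A. \<forall>z\<in>snd c ` (fst c \<inter> fst d).
        U c z = U d (transition c d z) * (deriv (transition c d) z) ^ 3)"

definition smooth_fun :: "'a chart set \<Rightarrow> ('a \<Rightarrow> real) \<Rightarrow> bool" where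
  "smooth_fun A u \<longleftrightarrow> (\<forall>c\<in>A. smooth_on (snd c ` fst c) (u \<circ> inv_into (fst c) (snd c)))"

definition laplacian :: "('a chart \<Rightarrow> complex \<Rightarrow> real) \<Rightarrow> 'a chart \<Rightarrow> ('a \<Rightarrow> real) \<Rightarrow> complex \<Rightarrow> real" where
  "laplacian rho c u z = lap0 (u \<circ> inv_into (fst c) (snd c)) z / rho c z"

definition gauss_curvature :: "('a chart \<Rightarrow> complex \<Rightarrow> real) \<Rightarrow> 'a chart \<Rightarrow> complex \<Rightarrow> real" where
  "gauss_curvature rho c z = - lap0 (\<lambda>w. ln (rho c w)) z / (2 * rho c z)"

definition cubic_norm2 :: "('a chart \<Rightarrow> complex \<Rightarrow> real) \<Rightarrow> ('a chart \<Rightarrow> complex \<Rightarrow> complex) \<Rightarrow> 'a chart \<Rightarrow> complex \<Rightarrow> real" where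
  "cubic_norm2 rho U c z = (cmod (U c z))\<^sup>2 / (rho c z) ^ 3"

definition solves_eq :: "'a chart set \<Rightarrow> ('a chart \<Rightarrow> complex \<Rightarrow> real) \<Rightarrow> ('a chart \<Rightarrow> complex \<Rightarrow> complex) \<Rightarrow> ('a \<Rightarrow> real) \<Rightarrow> bool" where
  "solves_eq A rho U u \<longleftrightarrow> smooth_fun A u \<and>
     (\<forall>c\<in>A. \<forall>p\<in>fst c. let z = snd c p in
        laplacian rho c u z + 4 * exp (-2 * u p) * cubic_norm2 rho U c z - 2 * exp (u p)
          - 2 * gauss_curvature rho c z = 0)"

end

theory Submission
  imports Defs
begin

(*
  In a chart write e^u h = e^psi |dz|^2 and U = V dz^3; then N = |V|^2 e^(-3 psi) is the quantity
  ||U||^2 e^(-3u), and the equation becomes  Delta_0 psi = 2 e^psi - 4 |V|^2 e^(-2 psi)  for the flat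
  Laplacian Delta_0.  Where V does not vanish, log |V|^2 is harmonic, so
  Delta_0 (log N) = 6 e^psi (2 N - 1).

  Upper bound: N is a continuous function on the closed surface; at its maximum Delta_0 (log N) <= 0,
  hence N <= 1/2 everywhere.

  Lower bound: v = - log (2 N) satisfies Delta_0 v = 6 e^psi (1 - e^(-v)) and e^psi >= m^(2/3) e^(v/3)
  on a disc of radius R around z0 on which |V| >= m.  The maximum principle against the barrier
  3 log B - 6 log (R^2 - |z - z0|^2), which blows up at the boundary, gives v(z0) <= 12 / (m^(2/3) R^2),
  i.e. N(z0) >= 1/2 - 6 / (m^(2/3) R^2).  For U = lam U0 one may take m proportional to lam, which
  produces the rate lam^(-2/3); finitely many such discs cover the compact set K.
*)

section \<open>Directional second derivatives\<close>

lemma second_derivative_nonpos_at_local_max: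
  fixes h h' :: "real \<Rightarrow> real"
  assumes "d > 0" and max: "\<And>t. \<bar>t\<bar> < d \<Longrightarrow> h t \<le> h 0"
    and h: "\<And>t. \<bar>t\<bar> < d \<Longrightarrow> (h has_real_derivative h' t) (at t)"
    and h': "(h' has_real_derivative a) (at 0)"
  shows "a \<le> 0"
proof (rule ccontr)
  assume "\<not> a \<le> 0"
  then obtain d1 where "d1 > 0" and h'_inc: "\<And>t. 0 < t \<Longrightarrow> t < d1 \<Longrightarrow> h' 0 < h' t"
    using DERIV_pos_inc_right[OF h'] by force
  have "h' 0 = 0"
    using DERIV_local_max[OF h[of 0] \<open>d > 0\<close>] max by (simp add: \<open>d > 0\<close>)
  define t where "t = min d d1 / 2"
  have t: "0 < t" "t < d" "t < d1" using \<open>d > 0\<close> \<open>d1 > 0\<close> by (auto simp: t_def)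
  obtain \<xi> where \<xi>: "0 < \<xi>" "\<xi> < t" "h t - h 0 = t * h' \<xi>"
    using MVT2[OF t(1), of h h'] h t by force
  have "h' \<xi> > 0" using h'_inc[of \<xi>] \<xi> t \<open>h' 0 = 0\<close> by simp
  with \<xi> t have "h t > h 0" by (simp add: algebra_simps)
  with max[of t] t show False by simp
qed

lemma eventually_line_in_open:
  fixes s v :: complex
  assumes "open T" "s \<in> T"
  shows "\<forall>\<^sub>F t in nhds 0. s + v * of_real t \<in> T"
proof -
  have "((\<lambda>t::real. s + v * of_real t) \<longlongrightarrow> s) (nhds 0)"
    by (rule tendsto_eq_intros filterlim_ident refl | simp)+
  with assms show ?thesis by (simp add: topological_tendstoD)
qed

lemma DERIV_line_shift:
  assumes "((\<lambda>\<tau>. f (z + v * of_real t + v * of_real \<tau>)) has_real_derivative D) (at 0)"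
  shows "((\<lambda>t. f (z + v * of_real t)) has_real_derivative D) (at t)"
  using assms DERIV_shift[of "\<lambda>t. f (z + v * of_real t)" D 0 t]
  by (simp add: algebra_simps)

text \<open>First derivatives are only required along the lines parallel to v near z: this is all that
  the maximum principle and the chain rule for ln need, and it avoids a theory of C^2 functions.\<close>

definition has_second_dir_deriv :: "(complex \<Rightarrow> real) \<Rightarrow> complex \<Rightarrow> real \<Rightarrow> complex \<Rightarrow> bool" where
  "has_second_dir_deriv f v a z \<longleftrightarrow> (\<exists>e>0. \<exists>D.
     (\<forall>s\<in>ball z e. ((\<lambda>t. f (s + v * of_real t)) has_real_derivative D s) (at 0)) \<and>
     ((\<lambda>t. D (z + v * of_real t)) has_real_derivative a) (at 0))"

lemma has_second_dir_derivI:
  assumes "e > 0"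
    "\<And>s. s \<in> ball z e \<Longrightarrow> ((\<lambda>t. f (s + v * of_real t)) has_real_derivative D s) (at 0)"
    "((\<lambda>t. D (z + v * of_real t)) has_real_derivative a) (at 0)"
  shows "has_second_dir_deriv f v a z"
  using assms unfolding has_second_dir_deriv_def by blast

lemma has_second_dir_deriv_imp_DERIV_line:
  assumes "has_second_dir_deriv f v a z"
  obtains d where "((\<lambda>t. f (z + v * of_real t)) has_real_derivative d) (at 0)"
proof -
  obtain e D where "e > 0"
    and "\<And>s. s \<in> ball z e \<Longrightarrow> ((\<lambda>t. f (s + v * of_real t)) has_real_derivative D s) (at 0)"
    using assms unfolding has_second_dir_deriv_def by blast
  then have "((\<lambda>t. f (z + v * of_real t)) has_real_derivative D z) (at 0)" by simp
  then show ?thesis by (rule that)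
qed

lemma has_second_dir_deriv_imp_deriv:
  assumes "has_second_dir_deriv f v a z"
  shows "deriv (\<lambda>t. deriv (\<lambda>\<tau>. f (z + v * of_real t + v * of_real \<tau>)) 0) 0 = a"
proof -
  obtain e D where "e > 0"
    and D: "\<And>s. s \<in> ball z e \<Longrightarrow> ((\<lambda>t. f (s + v * of_real t)) has_real_derivative D s) (at 0)"
    and D': "((\<lambda>t. D (z + v * of_real t)) has_real_derivative a) (at 0)"
    using assms unfolding has_second_dir_deriv_def by blast
  have "\<forall>\<^sub>F t in nhds 0. z + v * of_real t \<in> ball z e"
    using \<open>e > 0\<close> by (intro eventually_line_in_open) auto
  then have "\<forall>\<^sub>F t in nhds 0. deriv (\<lambda>\<tau>. f (z + v * of_real t + v * of_real \<tau>)) 0 = D (z + v * of_real t)"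
    by eventually_elim (use D DERIV_imp_deriv in blast)
  with D' have "((\<lambda>t. deriv (\<lambda>\<tau>. f (z + v * of_real t + v * of_real \<tau>)) 0) has_real_derivative a) (at 0)"
    using DERIV_cong_ev by fastforce
  then show ?thesis by (rule DERIV_imp_deriv)
qed

lemma has_second_dir_deriv_local_max:
  assumes "has_second_dir_deriv f v a z" "e0 > 0" "\<And>s. s \<in> ball z e0 \<Longrightarrow> f s \<le> f z"
  shows "a \<le> 0"
proof -
  obtain e D where "e > 0"
    and D: "\<And>s. s \<in> ball z e \<Longrightarrow> ((\<lambda>t. f (s + v * of_real t)) has_real_derivative D s) (at 0)"
    and D': "((\<lambda>t. D (z + v * of_real t)) has_real_derivative a) (at 0)"
    using assms(1) unfolding has_second_dir_deriv_def by blast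
  define d where "d = min e e0 / (cmod v + 1)"
  have "cmod v + 1 > 0" using norm_ge_zero[of v] by linarith
  then have "d > 0" using \<open>e > 0\<close> \<open>e0 > 0\<close> by (simp add: d_def)
  have near: "z + v * of_real t \<in> ball z e \<inter> ball z e0" if "\<bar>t\<bar> < d" for t
  proof -
    have "cmod v * \<bar>t\<bar> \<le> (cmod v + 1) * \<bar>t\<bar>" by (simp add: mult_right_mono)
    also have "\<dots> < (cmod v + 1) * d" using that \<open>cmod v + 1 > 0\<close> by simp
    also have "\<dots> = min e e0" using \<open>cmod v + 1 > 0\<close> by (simp add: d_def)
    finally show ?thesis by (simp add: dist_norm norm_mult)
  qed
  show ?thesis
  proof (rule second_derivative_nonpos_at_local_max[OF \<open>d > 0\<close> _ _ D'])
    fix t :: real assume "\<bar>t\<bar> < d"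
    with near show "f (z + v * of_real t) \<le> f (z + v * of_real 0)" using assms(3) by simp
    show "((\<lambda>t. f (z + v * of_real t)) has_real_derivative D (z + v * of_real t)) (at t)"
      by (rule DERIV_line_shift) (use D near \<open>\<bar>t\<bar> < d\<close> in blast)
  qed
qed

lemma has_second_dir_deriv_add:
  assumes "has_second_dir_deriv f v a z" "has_second_dir_deriv g v b z"
  shows "has_second_dir_deriv (\<lambda>s. f s + g s) v (a + b) z"
proof -
  obtain e1 D1 where "e1 > 0"
    and "\<And>s. s \<in> ball z e1 \<Longrightarrow> ((\<lambda>t. f (s + v * of_real t)) has_real_derivative D1 s) (at 0)"
    and "((\<lambda>t. D1 (z + v * of_real t)) has_real_derivative a) (at 0)"
    using assms(1) unfolding has_second_dir_deriv_def by blast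
  moreover obtain e2 D2 where "e2 > 0"
    and "\<And>s. s \<in> ball z e2 \<Longrightarrow> ((\<lambda>t. g (s + v * of_real t)) has_real_derivative D2 s) (at 0)"
    and "((\<lambda>t. D2 (z + v * of_real t)) has_real_derivative b) (at 0)"
    using assms(2) unfolding has_second_dir_deriv_def by blast
  ultimately show ?thesis
    by (intro has_second_dir_derivI[of "min e1 e2" _ _ _ "\<lambda>s. D1 s + D2 s"]) (auto intro!: DERIV_add)
qed

lemma has_second_dir_deriv_scale:
  assumes "has_second_dir_deriv f v a z"
  shows "has_second_dir_deriv (\<lambda>s. k * f s) v (k * a) z"
proof -
  obtain e D where "e > 0"
    and "\<And>s. s \<in> ball z e \<Longrightarrow> ((\<lambda>t. f (s + v * of_real t)) has_real_derivative D s) (at 0)"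
    and "((\<lambda>t. D (z + v * of_real t)) has_real_derivative a) (at 0)"
    using assms unfolding has_second_dir_deriv_def by blast
  then show ?thesis
    by (intro has_second_dir_derivI[of e _ _ _ "\<lambda>s. k * D s"]) (auto intro!: DERIV_cmult)
qed

lemma has_second_dir_deriv_const: "has_second_dir_deriv (\<lambda>s. k) v 0 z"
  by (rule has_second_dir_derivI[of 1 _ _ _ "\<lambda>s. 0"]) auto

lemma has_second_dir_deriv_cong:
  assumes "has_second_dir_deriv f v a z" "e0 > 0" "\<And>s. s \<in> ball z e0 \<Longrightarrow> g s = f s"
  shows "has_second_dir_deriv g v a z"
proof -
  obtain e D where "e > 0"
    and D: "\<And>s. s \<in> ball z e \<Longrightarrow> ((\<lambda>t. f (s + v * of_real t)) has_real_derivative D s) (at 0)"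
    and D': "((\<lambda>t. D (z + v * of_real t)) has_real_derivative a) (at 0)"
    using assms(1) unfolding has_second_dir_deriv_def by blast
  show ?thesis
  proof (rule has_second_dir_derivI[of "min e e0" _ _ _ D, OF _ _ D'])
    fix s assume s: "s \<in> ball z (min e e0)"
    have "\<forall>\<^sub>F t in nhds 0. s + v * of_real t \<in> ball z e0"
      using s by (intro eventually_line_in_open) auto
    then have "\<forall>\<^sub>F t in nhds 0. g (s + v * of_real t) = f (s + v * of_real t)"
      by eventually_elim (rule assms(3))
    with D[of s] s show "((\<lambda>t. g (s + v * of_real t)) has_real_derivative D s) (at 0)"
      using DERIV_cong_ev by fastforce
  qed (use \<open>e > 0\<close> assms(2) in simp)
qed

lemma has_second_dir_deriv_ln:
  assumes "has_second_dir_deriv f v a z"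
    and d: "((\<lambda>t. f (z + v * of_real t)) has_real_derivative d) (at 0)"
    and "e0 > 0" and pos: "\<And>s. s \<in> ball z e0 \<Longrightarrow> f s > 0"
  shows "has_second_dir_deriv (\<lambda>s. ln (f s)) v ((a * f z - d\<^sup>2) / (f z)\<^sup>2) z"
proof -
  obtain e D where "e > 0"
    and D: "\<And>s. s \<in> ball z e \<Longrightarrow> ((\<lambda>t. f (s + v * of_real t)) has_real_derivative D s) (at 0)"
    and D': "((\<lambda>t. D (z + v * of_real t)) has_real_derivative a) (at 0)"
    using assms(1) unfolding has_second_dir_deriv_def by blast
  have "D z = d" using D[of z] \<open>e > 0\<close> d DERIV_unique by force
  have "f z > 0" using pos \<open>e0 > 0\<close> by simp
  show ?thesis
  proof (rule has_second_dir_derivI[of "min e e0" _ _ _ "\<lambda>s. D s / f s"])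
    fix s assume s: "s \<in> ball z (min e e0)"
    then have "f s > 0" using pos by simp
    with D[of s] s show "((\<lambda>t. ln (f (s + v * of_real t))) has_real_derivative D s / f s) (at 0)"
      by (auto intro!: derivative_eq_intros simp: field_simps)
  next
    show "((\<lambda>t. D (z + v * of_real t) / f (z + v * of_real t)) has_real_derivative
           (a * f z - d\<^sup>2) / (f z)\<^sup>2) (at 0)"
      using DERIV_divide[OF D' d] \<open>f z > 0\<close> \<open>D z = d\<close> by (simp add: power2_eq_square)
  qed (use \<open>e > 0\<close> \<open>e0 > 0\<close> in simp)
qed

lemma differentiable_imp_DERIV_line:
  fixes s v :: complex
  assumes "g differentiable (at s)"
  shows "((\<lambda>t. g (s + v * of_real t)) has_real_derivative deriv (\<lambda>t. g (s + v * of_real t)) 0) (at 0)"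
proof -
  have "((\<lambda>t. s + v * of_real t) has_vector_derivative v) (at 0)"
    by (auto intro!: derivative_eq_intros simp: has_vector_derivative_def scaleR_conv_of_real)
  then have "(\<lambda>t::real. s + v * of_real t) differentiable (at 0)"
    by (rule differentiableI_vector)
  then have "(\<lambda>t. g (s + v * of_real t)) differentiable (at 0)"
    using differentiable_chain_at[of "\<lambda>t. s + v * of_real t" 0 g] assms by (simp add: o_def)
  then show ?thesis by (simp add: DERIV_deriv_iff_real_differentiable)
qed

lemma Ck2_has_second_dir_deriv:
  assumes "Ck 2 S f" "open S" "z \<in> S"
  shows "has_second_dir_deriv f 1 (dx (dx f) z) z" "has_second_dir_deriv f \<i> (dy (dy f) z) z"
proof -
  have diff: "\<forall>z\<in>S. f differentiable (at z)" "\<forall>z\<in>S. dx f differentiable (at z)"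
    "\<forall>z\<in>S. dy f differentiable (at z)"
    using assms(1) by (simp_all add: numeral_2_eq_2)
  obtain e where "e > 0" "ball z e \<subseteq> S" using assms(2,3) open_contains_ball by blast
  show "has_second_dir_deriv f 1 (dx (dx f) z) z"
  proof (rule has_second_dir_derivI[OF \<open>e > 0\<close>])
    show "((\<lambda>t. f (s + 1 * of_real t)) has_real_derivative dx f s) (at 0)" if "s \<in> ball z e" for s
      using differentiable_imp_DERIV_line[of f s 1] diff(1) that \<open>ball z e \<subseteq> S\<close> by (auto simp: dx_def)
    show "((\<lambda>t. dx f (z + 1 * of_real t)) has_real_derivative dx (dx f) z) (at 0)"
      using differentiable_imp_DERIV_line[of "dx f" z 1] diff(2) assms(3) by (simp add: dx_def[of "dx f"])
  qed
  show "has_second_dir_deriv f \<i> (dy (dy f) z) z"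
  proof (rule has_second_dir_derivI[OF \<open>e > 0\<close>])
    show "((\<lambda>t. f (s + \<i> * of_real t)) has_real_derivative dy f s) (at 0)" if "s \<in> ball z e" for s
      using differentiable_imp_DERIV_line[of f s \<i>] diff(1) that \<open>ball z e \<subseteq> S\<close> by (auto simp: dy_def)
    show "((\<lambda>t. dy f (z + \<i> * of_real t)) has_real_derivative dy (dy f) z) (at 0)"
      using differentiable_imp_DERIV_line[of "dy f" z \<i>] diff(3) assms(3) by (simp add: dy_def[of "dy f"])
  qed
qed

lemma DERIV_Re_holomorphic_line:
  assumes "g holomorphic_on S" "open S" "s \<in> S"
  shows "((\<lambda>t. Re (c * g (s + v * of_real t))) has_real_derivative Re (c * v * deriv g s)) (at 0)"
proof -
  have "((\<lambda>w. c * g w) has_field_derivative c * deriv g s) (at s)"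
    using holomorphic_derivI[OF assms] by (auto intro!: derivative_eq_intros)
  moreover have "((\<lambda>t. s + v * of_real t) has_vector_derivative v) (at 0)"
    by (auto intro!: derivative_eq_intros simp: has_vector_derivative_def scaleR_conv_of_real)
  ultimately have "((\<lambda>t. c * g (s + v * of_real t)) has_vector_derivative v * (c * deriv g s)) (at 0)"
    using field_vector_diff_chain_at by (fastforce simp: o_def)
  then have "((\<lambda>t. c * g (s + v * of_real t)) has_derivative (\<lambda>h. h *\<^sub>R (v * (c * deriv g s)))) (at 0)"
    by (simp add: has_vector_derivative_def)
  then have "((\<lambda>t. Re (c * g (s + v * of_real t))) has_derivative (\<lambda>h. Re (h *\<^sub>R (v * (c * deriv g s))))) (at 0)"
    by (rule has_derivative_Re)
  moreover have "(\<lambda>h. Re (h *\<^sub>R (v * (c * deriv g s)))) = (*) (Re (c * v * deriv g s))"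
    by (auto simp: fun_eq_iff algebra_simps)
  ultimately show ?thesis by (simp add: has_field_derivative_def)
qed

lemma has_second_dir_deriv_Re_holomorphic:
  assumes "g holomorphic_on S" "open S" "z \<in> S"
  shows "has_second_dir_deriv (\<lambda>s. Re (g s)) v (Re (v\<^sup>2 * deriv (deriv g) z)) z"
proof -
  obtain e where "e > 0" "ball z e \<subseteq> S" using assms(2,3) open_contains_ball by blast
  have "deriv g holomorphic_on S" using assms(1,2) by (rule holomorphic_deriv)
  from DERIV_Re_holomorphic_line[OF this assms(2,3), of v v]
  have "((\<lambda>t. Re (v * deriv g (z + v * of_real t))) has_real_derivative Re (v\<^sup>2 * deriv (deriv g) z)) (at 0)"
    by (simp add: power2_eq_square)
  moreover have "((\<lambda>t. Re (g (s + v * of_real t))) has_real_derivative Re (v * deriv g s)) (at 0)"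
    if "s \<in> ball z e" for s
    using DERIV_Re_holomorphic_line[OF assms(1,2), of s 1 v] that \<open>ball z e \<subseteq> S\<close> by auto
  ultimately show ?thesis
    using \<open>e > 0\<close> by (intro has_second_dir_derivI[of e _ _ _ "\<lambda>s. Re (v * deriv g s)"])
qed

lemma DERIV_quadratic_line:
  "((\<lambda>t. c - (cmod (s + v * of_real t - z0))\<^sup>2) has_real_derivative
      - 2 * (Re (s - z0) * Re v + Im (s - z0) * Im v)) (at 0)"
proof -
  have "(cmod (s + v * of_real t - z0))\<^sup>2 = (Re (s - z0) + t * Re v)\<^sup>2 + (Im (s - z0) + t * Im v)\<^sup>2"
    for t :: real
    by (simp add: cmod_power2 algebra_simps)
  then show ?thesis by (auto intro!: derivative_eq_intros)
qed

lemma has_second_dir_deriv_quadratic: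
  "has_second_dir_deriv (\<lambda>s. c - (cmod (s - z0))\<^sup>2) v (- 2 * (cmod v)\<^sup>2) z"
proof (rule has_second_dir_derivI[OF zero_less_one DERIV_quadratic_line])
  show "((\<lambda>t. - 2 * (Re (z + v * of_real t - z0) * Re v + Im (z + v * of_real t - z0) * Im v))
          has_real_derivative - 2 * (cmod v)\<^sup>2) (at 0)"
    unfolding cmod_power2 by (auto intro!: derivative_eq_intros simp: power2_eq_square)
qed

section \<open>The flat Laplacian\<close>

definition has_flat_laplacian :: "(complex \<Rightarrow> real) \<Rightarrow> real \<Rightarrow> complex \<Rightarrow> bool" where
  "has_flat_laplacian f L z \<longleftrightarrow>
     (\<exists>a b. has_second_dir_deriv f 1 a z \<and> has_second_dir_deriv f \<i> b z \<and> L = a + b)"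

lemma has_flat_laplacianI:
  "has_second_dir_deriv f 1 a z \<Longrightarrow> has_second_dir_deriv f \<i> b z \<Longrightarrow> has_flat_laplacian f (a + b) z"
  unfolding has_flat_laplacian_def by blast

lemma has_flat_laplacian_imp_lap0:
  assumes "has_flat_laplacian f L z"
  shows "lap0 f z = L"
proof -
  obtain a b where "has_second_dir_deriv f 1 a z" "has_second_dir_deriv f \<i> b z" "L = a + b"
    using assms unfolding has_flat_laplacian_def by blast
  then show ?thesis
    using has_second_dir_deriv_imp_deriv[of f 1 a z] has_second_dir_deriv_imp_deriv[of f \<i> b z]
    by (simp add: lap0_def dx_def dy_def)
qed

lemma Ck2_has_flat_laplacian:
  assumes "Ck 2 S f" "open S" "z \<in> S"
  shows "has_flat_laplacian f (lap0 f z) z"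
  unfolding lap0_def using Ck2_has_second_dir_deriv[OF assms] by (rule has_flat_laplacianI)

lemma has_flat_laplacian_add:
  assumes "has_flat_laplacian f L z" "has_flat_laplacian g M z"
  shows "has_flat_laplacian (\<lambda>s. f s + g s) (L + M) z"
proof -
  obtain a b c d where "has_second_dir_deriv f 1 a z" "has_second_dir_deriv f \<i> b z"
    "has_second_dir_deriv g 1 c z" "has_second_dir_deriv g \<i> d z" "L = a + b" "M = c + d"
    using assms unfolding has_flat_laplacian_def by blast
  then have "has_flat_laplacian (\<lambda>s. f s + g s) ((a + c) + (b + d)) z"
    by (intro has_flat_laplacianI has_second_dir_deriv_add)
  then show ?thesis using \<open>L = a + b\<close> \<open>M = c + d\<close> by (simp add: algebra_simps)
qed

lemma has_flat_laplacian_scale: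
  assumes "has_flat_laplacian f L z"
  shows "has_flat_laplacian (\<lambda>s. k * f s) (k * L) z"
proof -
  obtain a b where "has_second_dir_deriv f 1 a z" "has_second_dir_deriv f \<i> b z" "L = a + b"
    using assms unfolding has_flat_laplacian_def by blast
  then have "has_flat_laplacian (\<lambda>s. k * f s) (k * a + k * b) z"
    by (intro has_flat_laplacianI has_second_dir_deriv_scale)
  then show ?thesis using \<open>L = a + b\<close> by (simp add: distrib_left)
qed

lemma has_flat_laplacian_const: "has_flat_laplacian (\<lambda>s. k) 0 z"
  using has_flat_laplacianI[OF has_second_dir_deriv_const has_second_dir_deriv_const] by simp

lemma has_flat_laplacian_diff:
  "has_flat_laplacian f L z \<Longrightarrow> has_flat_laplacian g M z \<Longrightarrow>
   has_flat_laplacian (\<lambda>s. f s - g s) (L - M) z"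
  using has_flat_laplacian_add[OF _ has_flat_laplacian_scale[of g M z "- 1"], of f L] by simp

lemma has_flat_laplacian_cong:
  "has_flat_laplacian f L z \<Longrightarrow> e > 0 \<Longrightarrow> (\<And>s. s \<in> ball z e \<Longrightarrow> g s = f s) \<Longrightarrow>
   has_flat_laplacian g L z"
  unfolding has_flat_laplacian_def by (blast intro: has_second_dir_deriv_cong)

lemma has_flat_laplacian_local_max:
  assumes "has_flat_laplacian f L z" "e > 0" "\<And>s. s \<in> ball z e \<Longrightarrow> f s \<le> f z"
  shows "L \<le> 0"
proof -
  obtain a b where a: "has_second_dir_deriv f 1 a z" and b: "has_second_dir_deriv f \<i> b z"
    and "L = a + b"
    using assms(1) unfolding has_flat_laplacian_def by blast
  have "a \<le> 0" by (rule has_second_dir_deriv_local_max[OF a assms(2,3)])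
  moreover have "b \<le> 0" by (rule has_second_dir_deriv_local_max[OF b assms(2,3)])
  ultimately show ?thesis using \<open>L = a + b\<close> by simp
qed

lemma has_flat_laplacian_ln:
  assumes "has_flat_laplacian f L z"
    and d1: "((\<lambda>t. f (z + of_real t)) has_real_derivative d1) (at 0)"
    and d2: "((\<lambda>t. f (z + \<i> * of_real t)) has_real_derivative d2) (at 0)"
    and "e > 0" "\<And>s. s \<in> ball z e \<Longrightarrow> f s > 0"
  shows "has_flat_laplacian (\<lambda>s. ln (f s)) ((L * f z - (d1\<^sup>2 + d2\<^sup>2)) / (f z)\<^sup>2) z"
proof -
  obtain a b where a: "has_second_dir_deriv f 1 a z" and b: "has_second_dir_deriv f \<i> b z"
    and "L = a + b"
    using assms(1) unfolding has_flat_laplacian_def by blast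
  have "has_flat_laplacian (\<lambda>s. ln (f s)) ((a * f z - d1\<^sup>2) / (f z)\<^sup>2 + (b * f z - d2\<^sup>2) / (f z)\<^sup>2) z"
    using d1 d2 assms(4,5)
    by (intro has_flat_laplacianI has_second_dir_deriv_ln[OF a] has_second_dir_deriv_ln[OF b]) auto
  then show ?thesis using \<open>L = a + b\<close> by (simp add: add_divide_distrib[symmetric] algebra_simps)
qed

lemma Ck2_has_flat_laplacian_ln:
  assumes "Ck 2 S f" "open S" "z \<in> S" "\<And>s. s \<in> S \<Longrightarrow> f s > 0"
  shows "has_flat_laplacian (\<lambda>s. ln (f s)) (lap0 (\<lambda>s. ln (f s)) z) z"
proof -
  obtain e where "e > 0" "ball z e \<subseteq> S" using assms(2,3) open_contains_ball by blast
  obtain d1 where "((\<lambda>t. f (z + 1 * of_real t)) has_real_derivative d1) (at 0)"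
    using Ck2_has_second_dir_deriv(1)[OF assms(1-3)] by (rule has_second_dir_deriv_imp_DERIV_line)
  moreover obtain d2 where "((\<lambda>t. f (z + \<i> * of_real t)) has_real_derivative d2) (at 0)"
    using Ck2_has_second_dir_deriv(2)[OF assms(1-3)] by (rule has_second_dir_deriv_imp_DERIV_line)
  ultimately have "has_flat_laplacian (\<lambda>s. ln (f s)) ((lap0 f z * f z - (d1\<^sup>2 + d2\<^sup>2)) / (f z)\<^sup>2) z"
    using Ck2_has_flat_laplacian[OF assms(1-3)] \<open>e > 0\<close> \<open>ball z e \<subseteq> S\<close> assms(4)
    by (intro has_flat_laplacian_ln) auto
  with has_flat_laplacian_imp_lap0 show ?thesis by metis
qed

lemma has_flat_laplacian_Re_holomorphic:
  assumes "g holomorphic_on S" "open S" "z \<in> S"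
  shows "has_flat_laplacian (\<lambda>s. Re (g s)) 0 z"
  using has_flat_laplacianI[OF has_second_dir_deriv_Re_holomorphic[OF assms]
                               has_second_dir_deriv_Re_holomorphic[OF assms]]
  by simp

lemma continuous_on_norm_lower_bound_cball:
  fixes f :: "complex \<Rightarrow> 'b::real_normed_vector"
  assumes "continuous_on S f" "open S" "z \<in> S" "f z \<noteq> 0"
  obtains r where "r > 0" "cball z r \<subseteq> S" "\<And>s. s \<in> cball z r \<Longrightarrow> norm (f z) / 2 \<le> norm (f s)"
proof -
  obtain e where "e > 0" "ball z e \<subseteq> S" using assms(2,3) open_contains_ball by blast
  have "continuous (at z) f"
    using assms(1-3) continuous_on_eq_continuous_at by blast
  then obtain \<delta> where "\<delta> > 0" and \<delta>: "\<And>y. dist y z < \<delta> \<Longrightarrow> dist (f y) (f z) < norm (f z) / 2"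
    using assms(4) unfolding continuous_at_eps_delta by (metis zero_less_norm_iff half_gt_zero)
  define r where "r = min e \<delta> / 2"
  have "r > 0" using \<open>e > 0\<close> \<open>\<delta> > 0\<close> by (simp add: r_def)
  moreover have "cball z r \<subseteq> ball z e" using \<open>e > 0\<close> \<open>\<delta> > 0\<close> by (auto simp: r_def)
  moreover have "norm (f z) / 2 \<le> norm (f s)" if "s \<in> cball z r" for s
  proof -
    have "dist s z < \<delta>" using that \<open>e > 0\<close> \<open>\<delta> > 0\<close> by (simp add: r_def dist_commute)
    then have "norm (f s - f z) < norm (f z) / 2" using \<delta> by (simp add: dist_norm)
    then show ?thesis using norm_triangle_sub[of "f z" "f s"] by (simp add: norm_minus_commute)
  qed
  ultimately show ?thesis using that \<open>ball z e \<subseteq> S\<close> by blast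
qed

lemma has_flat_laplacian_ln_norm_holomorphic:
  assumes "V holomorphic_on S" "open S" "z \<in> S" "V z \<noteq> 0"
  shows "has_flat_laplacian (\<lambda>s. ln ((cmod (V s))\<^sup>2)) 0 z"
proof -
  obtain r where "r > 0" "cball z r \<subseteq> S" and r: "\<And>s. s \<in> cball z r \<Longrightarrow> cmod (V z) / 2 \<le> cmod (V s)"
    using continuous_on_norm_lower_bound_cball assms holomorphic_on_imp_continuous_on by metis
  have "V s \<noteq> 0" if "s \<in> ball z r" for s
    using r[of s] that assms(4) by force
  then obtain g where g: "g holomorphic_on ball z r" and V: "\<And>s. s \<in> ball z r \<Longrightarrow> V s = exp (g s)"
    using contractible_imp_holomorphic_log[of V "ball z r"] convex_imp_contractible[OF convex_ball]
      holomorphic_on_subset[OF assms(1)] \<open>cball z r \<subseteq> S\<close> ball_subset_cball by (metis subset_trans)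
  have "has_flat_laplacian (\<lambda>s. 2 * Re (g s)) 0 z"
    using has_flat_laplacian_scale[OF has_flat_laplacian_Re_holomorphic[OF g open_ball], of z 2]
      \<open>r > 0\<close> by simp
  then show ?thesis
  proof (rule has_flat_laplacian_cong[OF _ \<open>r > 0\<close>])
    show "ln ((cmod (V s))\<^sup>2) = 2 * Re (g s)" if "s \<in> ball z r" for s
      using V[OF that] by (simp add: norm_exp_eq_Re ln_realpow[symmetric] exp_of_nat_mult[symmetric] power_commutes)
  qed
qed

lemma has_flat_laplacian_ln_barrier:
  assumes "cmod (z - z0) < R"
  shows "has_flat_laplacian (\<lambda>s. ln (R\<^sup>2 - (cmod (s - z0))\<^sup>2))
           (- 4 * R\<^sup>2 / (R\<^sup>2 - (cmod (z - z0))\<^sup>2)\<^sup>2) z"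
proof -
  define p where "p s = R\<^sup>2 - (cmod (s - z0))\<^sup>2" for s
  have "has_flat_laplacian p (- 4) z"
    using has_flat_laplacianI[OF has_second_dir_deriv_quadratic has_second_dir_deriv_quadratic]
    unfolding p_def by simp
  moreover have "((\<lambda>t. p (z + of_real t)) has_real_derivative - 2 * Re (z - z0)) (at 0)"
    using DERIV_quadratic_line[of "R\<^sup>2" z 1 z0] by (simp add: p_def)
  moreover have "((\<lambda>t. p (z + \<i> * of_real t)) has_real_derivative - 2 * Im (z - z0)) (at 0)"
    using DERIV_quadratic_line[of "R\<^sup>2" z \<i> z0] by (simp add: p_def)
  moreover have "R - cmod (z - z0) > 0" using assms by simp
  moreover have "p s > 0" if "s \<in> ball z (R - cmod (z - z0))" for s
  proof -
    have "cmod (s - z0) \<le> cmod (s - z) + cmod (z - z0)"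
      using norm_triangle_ineq[of "s - z" "z - z0"] by simp
    also have "\<dots> < R" using that by (simp add: dist_norm norm_minus_commute)
    finally have "cmod (s - z0) < R" .
    then show ?thesis by (simp add: p_def power_strict_mono abs_less_iff)
  qed
  ultimately have lap: "has_flat_laplacian (\<lambda>s. ln (p s))
      ((- 4 * p z - ((- 2 * Re (z - z0))\<^sup>2 + (- 2 * Im (z - z0))\<^sup>2)) / (p z)\<^sup>2) z"
    by (rule has_flat_laplacian_ln)
  have "- 4 * p z - ((- 2 * Re (z - z0))\<^sup>2 + (- 2 * Im (z - z0))\<^sup>2) = - 4 * R\<^sup>2"
    unfolding p_def cmod_power2 by (simp add: power2_eq_square algebra_simps)
  from lap[unfolded this] show ?thesis unfolding p_def .
qed

section \<open>Maximum principle against a logarithmic barrier\<close>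

lemma log_barrier_small_near_sphere:
  fixes v :: "complex \<Rightarrow> real"
  assumes "continuous_on (cball z0 R) v" "R > 0" "k > 0"
  obtains r where "0 < r" "r < R"
    "\<And>s. dist z0 s = r \<Longrightarrow> v s + k * ln (R\<^sup>2 - (cmod (s - z0))\<^sup>2) < v z0 + k * ln (R\<^sup>2)"
proof -
  obtain M where M: "\<And>s. s \<in> cball z0 R \<Longrightarrow> v s \<le> M"
    using continuous_attains_sup[OF compact_cball _ assms(1)] \<open>R > 0\<close> by fastforce
  define \<sigma> where "\<sigma> = min (R\<^sup>2 / 2) (exp ((v z0 + k * ln (R\<^sup>2) - M - 1) / k))"
  have "\<sigma> > 0" "\<sigma> < R\<^sup>2" using \<open>R > 0\<close> by (auto simp: \<sigma>_def min_less_iff_disj)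
  have "ln \<sigma> \<le> ln (exp ((v z0 + k * ln (R\<^sup>2) - M - 1) / k))"
    using \<open>\<sigma> > 0\<close> by (subst ln_le_cancel_iff) (auto simp: \<sigma>_def)
  then have "k * ln \<sigma> \<le> v z0 + k * ln (R\<^sup>2) - M - 1" using \<open>k > 0\<close> by (simp add: field_simps)
  define r where "r = sqrt (R\<^sup>2 - \<sigma>)"
  have "r < sqrt (R\<^sup>2)" unfolding r_def using \<open>\<sigma> > 0\<close> by (intro real_sqrt_less_mono) simp
  show ?thesis
  proof (rule that)
    show "0 < r" "r < R" using \<open>\<sigma> < R\<^sup>2\<close> \<open>r < sqrt (R\<^sup>2)\<close> \<open>R > 0\<close> by (simp_all add: r_def)
    fix s assume "dist z0 s = r"
    then have "R\<^sup>2 - (cmod (s - z0))\<^sup>2 = \<sigma>"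
      using \<open>\<sigma> < R\<^sup>2\<close> by (simp add: r_def dist_norm norm_minus_commute)
    moreover have "v s \<le> M" using M \<open>dist z0 s = r\<close> \<open>r < R\<close> by simp
    ultimately show "v s + k * ln (R\<^sup>2 - (cmod (s - z0))\<^sup>2) < v z0 + k * ln (R\<^sup>2)"
      using \<open>k * ln \<sigma> \<le> v z0 + k * ln (R\<^sup>2) - M - 1\<close> by simp
  qed
qed

lemma exists_interior_max_log_barrier:
  fixes v :: "complex \<Rightarrow> real"
  assumes "continuous_on (cball z0 R) v" "R > 0" "k > 0"
  defines "\<Phi> \<equiv> \<lambda>s. v s + k * ln (R\<^sup>2 - (cmod (s - z0))\<^sup>2)"
  obtains zs e where "e > 0" "ball zs e \<subseteq> ball z0 R" "\<And>s. s \<in> ball zs e \<Longrightarrow> \<Phi> s \<le> \<Phi> zs"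
    "\<Phi> z0 \<le> \<Phi> zs"
proof -
  obtain r where "0 < r" "r < R" and sphere: "\<And>s. dist z0 s = r \<Longrightarrow> \<Phi> s < \<Phi> z0"
    using log_barrier_small_near_sphere[OF assms(1-3)] unfolding \<Phi>_def by auto
  have nonzero: "R\<^sup>2 - (cmod (s - z0))\<^sup>2 \<noteq> 0" if "s \<in> cball z0 r" for s
  proof -
    have "cmod (s - z0) < R" using that \<open>r < R\<close> by (simp add: dist_norm norm_minus_commute)
    then have "(cmod (s - z0))\<^sup>2 < R\<^sup>2" by (simp add: power_strict_mono)
    then show ?thesis by simp
  qed
  have "continuous_on (cball z0 r) \<Phi>"
    unfolding \<Phi>_def
    by (intro continuous_intros continuous_on_subset[OF assms(1)] continuous_on_ln ballI nonzero)
       (use \<open>r < R\<close> in auto)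
  then obtain zs where zs: "zs \<in> cball z0 r" and max: "\<And>s. s \<in> cball z0 r \<Longrightarrow> \<Phi> s \<le> \<Phi> zs"
    using continuous_attains_sup[OF compact_cball] \<open>r > 0\<close> by (metis cball_eq_empty not_less order_less_imp_le)
  have "\<Phi> z0 \<le> \<Phi> zs" using max \<open>r > 0\<close> by simp
  then have "dist z0 zs < r" using zs sphere[of zs] by force
  show ?thesis
  proof (rule that[of "r - dist z0 zs"])
    show "ball zs (r - dist z0 zs) \<subseteq> ball z0 R"
    proof
      fix s assume "s \<in> ball zs (r - dist z0 zs)"
      then show "s \<in> ball z0 R" using dist_triangle[of z0 s zs] \<open>r < R\<close> by simp
    qed
    show "\<Phi> s \<le> \<Phi> zs" if "s \<in> ball zs (r - dist z0 zs)" for s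
      using that dist_triangle[of z0 s zs] by (intro max) auto
  qed (use \<open>dist z0 zs < r\<close> \<open>\<Phi> z0 \<le> \<Phi> zs\<close> in auto)
qed

lemma barrier_inequality:
  fixes E k R s v :: real
  assumes "k > 0" "R > 0" "0 < s" "s \<le> R\<^sup>2" and E: "k * exp (v / 3) \<le> E"
    and v: "3 * ln (4 * R\<^sup>2 / k + R ^ 4) - 6 * ln s < v"
  shows "24 * R\<^sup>2 / s\<^sup>2 < 6 * E * (1 - exp (- v))"
proof -
  define B where "B = 4 * R\<^sup>2 / k + R ^ 4"
  have "B > R ^ 4" using \<open>k > 0\<close> \<open>R > 0\<close> by (simp add: B_def)
  moreover have "R ^ 4 > 0" using \<open>R > 0\<close> by simp
  ultimately have "B > 0" by linarith
  have "s\<^sup>2 \<le> R ^ 4" using power_mono[OF \<open>s \<le> R\<^sup>2\<close>, of 2] \<open>s > 0\<close> by simp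
  have "B / s\<^sup>2 < exp (v / 3)"
  proof -
    have "exp (ln B - 2 * ln s) < exp (v / 3)" using v by (simp add: B_def)
    moreover have "2 * ln s = ln (s\<^sup>2)" using \<open>s > 0\<close> by (simp add: ln_realpow)
    then have "exp (ln B - 2 * ln s) = B / s\<^sup>2"
      using \<open>B > 0\<close> \<open>s > 0\<close> by (simp add: exp_diff)
    ultimately show ?thesis by simp
  qed
  have "1 \<le> B / s\<^sup>2" using \<open>B > R ^ 4\<close> \<open>s\<^sup>2 \<le> R ^ 4\<close> \<open>s > 0\<close> by simp
  then have "1 < exp (v / 3)" using \<open>B / s\<^sup>2 < exp (v / 3)\<close> by linarith
  then have "v > 0" by simp
  have "exp (v / 3) * (1 - exp (- v)) = exp (v / 3) - exp (- 2 * v / 3)"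
    by (simp add: algebra_simps exp_add[symmetric])
  moreover have "exp (- 2 * v / 3) \<le> 1" using \<open>v > 0\<close> by simp
  ultimately have "exp (v / 3) - 1 \<le> exp (v / 3) * (1 - exp (- v))" by simp
  have "24 * R\<^sup>2 / s\<^sup>2 \<le> 6 * k * (B / s\<^sup>2 - 1)"
  proof -
    have "6 * k * (B / s\<^sup>2 - 1) = 24 * R\<^sup>2 / s\<^sup>2 + 6 * k * (R ^ 4 / s\<^sup>2 - 1)"
      using \<open>k > 0\<close> \<open>s > 0\<close> by (simp add: B_def field_simps)
    moreover have "R ^ 4 / s\<^sup>2 \<ge> 1" using \<open>s\<^sup>2 \<le> R ^ 4\<close> \<open>s > 0\<close> by simp
    ultimately show ?thesis using \<open>k > 0\<close> by simp
  qed
  also have "\<dots> < 6 * k * (exp (v / 3) - 1)"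
    using \<open>B / s\<^sup>2 < exp (v / 3)\<close> \<open>k > 0\<close> by simp
  also have "\<dots> \<le> 6 * k * (exp (v / 3) * (1 - exp (- v)))"
    using \<open>exp (v / 3) - 1 \<le> exp (v / 3) * (1 - exp (- v))\<close> \<open>k > 0\<close> by simp
  also have "\<dots> \<le> 6 * E * (1 - exp (- v))"
    using E \<open>v > 0\<close> by (simp add: mult_right_mono)
  finally show ?thesis .
qed

lemma ln_barrier_at_centre_le:
  fixes k R :: real
  assumes "k > 0" "R > 0"
  shows "3 * ln (4 * R\<^sup>2 / k + R ^ 4) - 6 * ln (R\<^sup>2) \<le> 12 / (k * R\<^sup>2)"
proof -
  have "4 * R\<^sup>2 / k + R ^ 4 = R\<^sup>2 ^ 2 * (1 + 4 / (k * R\<^sup>2))"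
    using assms by (simp add: field_simps power2_eq_square power4_eq_xxxx)
  moreover have "0 < 1 + 4 / (k * R\<^sup>2)" using assms by (simp add: add_pos_pos)
  ultimately have "3 * ln (4 * R\<^sup>2 / k + R ^ 4) - 6 * ln (R\<^sup>2) = 3 * ln (1 + 4 / (k * R\<^sup>2))"
    using \<open>R > 0\<close> by (simp add: ln_mult ln_realpow)
  also have "\<dots> \<le> 3 * (4 / (k * R\<^sup>2))"
    using ln_add_one_self_le_self[of "4 / (k * R\<^sup>2)"] assms by simp
  finally show ?thesis by simp
qed

lemma log_barrier_comparison:
  fixes v \<psi> :: "complex \<Rightarrow> real"
  assumes "R > 0" "k > 0" "continuous_on (cball z0 R) v"
    and lap: "\<And>s. s \<in> ball z0 R \<Longrightarrow> has_flat_laplacian v (6 * exp (\<psi> s) * (1 - exp (- v s))) s"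
    and exp_\<psi>: "\<And>s. s \<in> ball z0 R \<Longrightarrow> k * exp (v s / 3) \<le> exp (\<psi> s)"
  shows "v z0 \<le> 12 / (k * R\<^sup>2)"
proof -
  \<comment> \<open>B is chosen so that the barrier w is a supersolution, see barrier_inequality.\<close>
  define B where "B = 4 * R\<^sup>2 / k + R ^ 4"
  define w where "w s = 3 * ln B - 6 * ln (R\<^sup>2 - (cmod (s - z0))\<^sup>2)" for s
  have "v z0 \<le> w z0"
  proof (rule ccontr)
    assume "\<not> v z0 \<le> w z0"
    obtain zs e where "e > 0" "ball zs e \<subseteq> ball z0 R"
      and max: "\<And>s. s \<in> ball zs e \<Longrightarrow> v s + 6 * ln (R\<^sup>2 - (cmod (s - z0))\<^sup>2)
                                       \<le> v zs + 6 * ln (R\<^sup>2 - (cmod (zs - z0))\<^sup>2)"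
      and ge: "v z0 + 6 * ln (R\<^sup>2 - (cmod (z0 - z0))\<^sup>2) \<le> v zs + 6 * ln (R\<^sup>2 - (cmod (zs - z0))\<^sup>2)"
      by (rule exists_interior_max_log_barrier[OF \<open>continuous_on (cball z0 R) v\<close> \<open>R > 0\<close>, of 6]) auto
    have "zs \<in> ball zs e" using \<open>e > 0\<close> by simp
    with \<open>ball zs e \<subseteq> ball z0 R\<close> have "zs \<in> ball z0 R" by blast
    then have "cmod (zs - z0) < R" by (simp add: dist_norm norm_minus_commute)
    define p where "p = R\<^sup>2 - (cmod (zs - z0))\<^sup>2"
    have "0 < p" "p \<le> R\<^sup>2"
      using \<open>cmod (zs - z0) < R\<close> by (auto simp: p_def power_strict_mono abs_less_iff)
    have "w zs < v zs" using ge \<open>\<not> v z0 \<le> w z0\<close> by (simp add: w_def p_def)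
    have "has_flat_laplacian (\<lambda>s. v s - w s)
            (6 * exp (\<psi> zs) * (1 - exp (- v zs)) - (0 - 6 * (- 4 * R\<^sup>2 / p\<^sup>2))) zs"
      unfolding w_def p_def using \<open>zs \<in> ball z0 R\<close> \<open>cmod (zs - z0) < R\<close>
      by (intro has_flat_laplacian_diff has_flat_laplacian_scale has_flat_laplacian_const
          lap has_flat_laplacian_ln_barrier)
    moreover have "v s - w s \<le> v zs - w zs" if "s \<in> ball zs e" for s
      using max[OF that] by (simp add: w_def)
    ultimately have "6 * exp (\<psi> zs) * (1 - exp (- v zs)) - (0 - 6 * (- 4 * R\<^sup>2 / p\<^sup>2)) \<le> 0"
      by (rule has_flat_laplacian_local_max[OF _ \<open>e > 0\<close>])
    moreover have "24 * R\<^sup>2 / p\<^sup>2 < 6 * exp (\<psi> zs) * (1 - exp (- v zs))"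
      using barrier_inequality[OF \<open>k > 0\<close> \<open>R > 0\<close> \<open>0 < p\<close> \<open>p \<le> R\<^sup>2\<close> exp_\<psi>[OF \<open>zs \<in> ball z0 R\<close>]]
        \<open>w zs < v zs\<close> by (simp add: w_def p_def B_def)
    ultimately show False by simp
  qed
  also have "w z0 \<le> 12 / (k * R\<^sup>2)"
    using ln_barrier_at_centre_le[OF \<open>k > 0\<close> \<open>R > 0\<close>] by (simp add: w_def B_def)
  finally show ?thesis .
qed

section \<open>Wang's equation in a chart\<close>

definition flat_cubic_norm2 :: "(complex \<Rightarrow> real) \<Rightarrow> (complex \<Rightarrow> complex) \<Rightarrow> complex \<Rightarrow> real" where
  "flat_cubic_norm2 \<psi> V z = (cmod (V z))\<^sup>2 * exp (- 3 * \<psi> z)"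

lemma flat_cubic_norm2_eq: "flat_cubic_norm2 \<psi> V z = (cmod (V z))\<^sup>2 / exp (\<psi> z) ^ 3"
  by (simp add: flat_cubic_norm2_def exp_minus field_simps flip: exp_of_nat_mult)

lemma exp_ge_of_flat_cubic_norm2:
  assumes "0 < m" "m \<le> cmod (V s)"
  shows "m powr (2 / 3) * exp ((- ln 2 - ln (flat_cubic_norm2 \<psi> V s)) / 3) \<le> exp (\<psi> s)"
proof -
  define k where "k = m powr (2 / 3)"
  have "k > 0" "k ^ 3 = m\<^sup>2" using \<open>m > 0\<close> by (simp_all add: k_def powr_power)
  have "V s \<noteq> 0" using assms by auto
  have "0 < flat_cubic_norm2 \<psi> V s" using \<open>V s \<noteq> 0\<close> by (simp add: flat_cubic_norm2_def)
  have "exp ((- ln 2 - ln (flat_cubic_norm2 \<psi> V s)) / 3) ^ 3 = exp (- ln 2 - ln (flat_cubic_norm2 \<psi> V s))"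
    by (simp flip: exp_of_nat_mult)
  also have "\<dots> = 1 / (2 * flat_cubic_norm2 \<psi> V s)"
    using \<open>0 < flat_cubic_norm2 \<psi> V s\<close> by (simp add: exp_diff exp_minus)
  also have "\<dots> = exp (\<psi> s) ^ 3 / (2 * (cmod (V s))\<^sup>2)"
    by (simp add: flat_cubic_norm2_eq)
  finally have "(k * exp ((- ln 2 - ln (flat_cubic_norm2 \<psi> V s)) / 3)) ^ 3
             = m\<^sup>2 / (2 * (cmod (V s))\<^sup>2) * exp (\<psi> s) ^ 3"
    using \<open>k ^ 3 = m\<^sup>2\<close> by (simp add: power_mult_distrib)
  also have "\<dots> \<le> exp (\<psi> s) ^ 3"
  proof (intro mult_left_le_one_le)
    have "m\<^sup>2 \<le> (cmod (V s))\<^sup>2" using assms by (simp add: power_mono)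
    then have "m\<^sup>2 \<le> 2 * (cmod (V s))\<^sup>2" using zero_le_power2[of "cmod (V s)"] by linarith
    then show "m\<^sup>2 / (2 * (cmod (V s))\<^sup>2) \<le> 1" using \<open>V s \<noteq> 0\<close> by simp
  qed auto
  finally show ?thesis
    using power_mono_iff[of "k * exp ((- ln 2 - ln (flat_cubic_norm2 \<psi> V s)) / 3)" "exp (\<psi> s)" 3]
      \<open>k > 0\<close> by (simp add: k_def)
qed

text \<open>psi is the log-density of the metric e^u h and V the coefficient of U in a chart; the
  equation is the chart form  4 psi_(z zbar) = 2 e^psi - 4 |V|^2 e^(-2 psi)  of the equation for u.\<close>

locale wang_solution =
  fixes S :: "complex set" and \<psi> :: "complex \<Rightarrow> real" and V :: "complex \<Rightarrow> complex"
  assumes open_domain: "open S"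
    and continuous: "continuous_on S \<psi>"
    and holomorphic: "V holomorphic_on S"
    and equation: "\<And>z. z \<in> S \<Longrightarrow>
      has_flat_laplacian \<psi> (2 * exp (\<psi> z) - 4 * (cmod (V z))\<^sup>2 * exp (- 2 * \<psi> z)) z"
begin

lemma continuous_on_flat_cubic_norm2: "continuous_on S (flat_cubic_norm2 \<psi> V)"
proof -
  have "flat_cubic_norm2 \<psi> V = (\<lambda>z. (cmod (V z))\<^sup>2 * exp (- 3 * \<psi> z))"
    by (simp add: fun_eq_iff flat_cubic_norm2_def)
  then show ?thesis
    using continuous holomorphic_on_imp_continuous_on[OF holomorphic] by (auto intro!: continuous_intros)
qed

lemma has_flat_laplacian_ln_norm2:
  assumes "z \<in> S" "V z \<noteq> 0"
  shows "has_flat_laplacian (\<lambda>s. ln (flat_cubic_norm2 \<psi> V s))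
           (6 * exp (\<psi> z) * (2 * flat_cubic_norm2 \<psi> V z - 1)) z"
proof -
  obtain r where "r > 0" "cball z r \<subseteq> S" and r: "\<And>s. s \<in> cball z r \<Longrightarrow> cmod (V z) / 2 \<le> cmod (V s)"
    using continuous_on_norm_lower_bound_cball holomorphic_on_imp_continuous_on[OF holomorphic]
      open_domain assms by metis
  have "has_flat_laplacian (\<lambda>s. ln ((cmod (V s))\<^sup>2) - 3 * \<psi> s)
          (0 - 3 * (2 * exp (\<psi> z) - 4 * (cmod (V z))\<^sup>2 * exp (- 2 * \<psi> z))) z"
    by (intro has_flat_laplacian_diff has_flat_laplacian_scale equation assms
          has_flat_laplacian_ln_norm_holomorphic[OF holomorphic open_domain])
  moreover have "exp (- 2 * \<psi> z) = exp (\<psi> z) * exp (- 3 * \<psi> z)"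
    by (simp flip: exp_add)
  ultimately have "has_flat_laplacian (\<lambda>s. ln ((cmod (V s))\<^sup>2) - 3 * \<psi> s)
          (6 * exp (\<psi> z) * (2 * flat_cubic_norm2 \<psi> V z - 1)) z"
    by (simp add: flat_cubic_norm2_def algebra_simps)
  then show ?thesis
  proof (rule has_flat_laplacian_cong[OF _ \<open>r > 0\<close>])
    fix s assume "s \<in> ball z r"
    then have "V s \<noteq> 0" using r[of s] assms(2) by force
    then show "ln (flat_cubic_norm2 \<psi> V s) = ln ((cmod (V s))\<^sup>2) - 3 * \<psi> s"
      by (simp add: flat_cubic_norm2_def ln_mult)
  qed
qed

lemma flat_cubic_norm2_le_half_at_max:
  assumes "z \<in> S" and max: "\<And>s. s \<in> S \<Longrightarrow> flat_cubic_norm2 \<psi> V s \<le> flat_cubic_norm2 \<psi> V z"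
  shows "flat_cubic_norm2 \<psi> V z \<le> 1 / 2"
proof (cases "V z = 0")
  case True
  then show ?thesis by (simp add: flat_cubic_norm2_def)
next
  case False
  obtain r where "r > 0" "cball z r \<subseteq> S" and r: "\<And>s. s \<in> cball z r \<Longrightarrow> cmod (V z) / 2 \<le> cmod (V s)"
    using continuous_on_norm_lower_bound_cball holomorphic_on_imp_continuous_on[OF holomorphic]
      open_domain assms(1) False by metis
  have "ln (flat_cubic_norm2 \<psi> V s) \<le> ln (flat_cubic_norm2 \<psi> V z)" if "s \<in> ball z r" for s
  proof -
    have "V s \<noteq> 0" using r[of s] that False by force
    then have "0 < flat_cubic_norm2 \<psi> V s" by (simp add: flat_cubic_norm2_def)
    moreover have "s \<in> S" using that \<open>cball z r \<subseteq> S\<close> by auto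
    ultimately show ?thesis using max[of s] by (subst ln_le_cancel_iff) auto
  qed
  with has_flat_laplacian_local_max[OF has_flat_laplacian_ln_norm2[OF assms(1) False] \<open>r > 0\<close>]
  have "6 * exp (\<psi> z) * (2 * flat_cubic_norm2 \<psi> V z - 1) \<le> 0" by blast
  then show ?thesis by (simp add: mult_le_0_iff)
qed

lemma flat_cubic_norm2_lower_bound:
  assumes "R > 0" "m > 0" "cball z0 R \<subseteq> S" and m: "\<And>s. s \<in> cball z0 R \<Longrightarrow> m \<le> cmod (V s)"
  shows "1 / 2 - 6 / (m powr (2 / 3) * R\<^sup>2) \<le> flat_cubic_norm2 \<psi> V z0"
proof -
  define N where "N = flat_cubic_norm2 \<psi> V"
  define v where "v s = - ln 2 - ln (N s)" for s
  have V_pos: "cmod (V s) > 0" if "s \<in> cball z0 R" for s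
    using m[OF that] \<open>m > 0\<close> by linarith
  have N_v: "2 * N s = exp (- v s)" if "s \<in> cball z0 R" for s
    using V_pos[OF that] by (simp add: v_def N_def flat_cubic_norm2_def exp_add)
  have "v z0 \<le> 12 / (m powr (2 / 3) * R\<^sup>2)"
  proof (rule log_barrier_comparison[OF \<open>R > 0\<close>])
    show "m powr (2 / 3) > 0" using \<open>m > 0\<close> by simp
    have "continuous_on (cball z0 R) \<psi>" "continuous_on (cball z0 R) V"
      using continuous_on_subset[OF continuous] holomorphic_on_imp_continuous_on[OF holomorphic]
        continuous_on_subset \<open>cball z0 R \<subseteq> S\<close> by blast+
    then show "continuous_on (cball z0 R) v"
      unfolding v_def N_def flat_cubic_norm2_def using V_pos
      by (intro continuous_intros continuous_on_ln) (fastforce simp: flat_cubic_norm2_def)+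
    fix s assume "s \<in> ball z0 R"
    then have "s \<in> cball z0 R" by simp
    then have "s \<in> S" "V s \<noteq> 0" using \<open>cball z0 R \<subseteq> S\<close> V_pos by auto
    then have "has_flat_laplacian v (0 - 6 * exp (\<psi> s) * (2 * N s - 1)) s"
      unfolding v_def N_def
      by (intro has_flat_laplacian_diff has_flat_laplacian_const has_flat_laplacian_ln_norm2)
    then show "has_flat_laplacian v (6 * exp (\<psi> s) * (1 - exp (- v s))) s"
      unfolding N_v[OF \<open>s \<in> cball z0 R\<close>, symmetric] by (simp add: algebra_simps)
    show "m powr (2 / 3) * exp (v s / 3) \<le> exp (\<psi> s)"
      unfolding v_def N_def using \<open>m > 0\<close> m[OF \<open>s \<in> cball z0 R\<close>]
      by (rule exp_ge_of_flat_cubic_norm2)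
  qed
  moreover have "1 - v z0 \<le> exp (- v z0)" using exp_ge_add_one_self[of "- v z0"] by simp
  ultimately show ?thesis using N_v[of z0] \<open>R > 0\<close> by (simp add: N_def)
qed

end

section \<open>From charts to the surface\<close>

lemma riemann_surface_chartD:
  assumes "riemann_surface X A" "c \<in> A"
  shows "openin X (fst c)" "open (snd c ` fst c)"
    "homeomorphic_map (subtopology X (fst c)) (top_of_set (snd c ` fst c)) (snd c)"
    "inj_on (snd c) (fst c)" "fst c \<subseteq> topspace X"
proof -
  obtain W \<phi> where c: "c = (W, \<phi>)" by fastforce
  show "openin X (fst c)" "open (snd c ` fst c)"
    and hom: "homeomorphic_map (subtopology X (fst c)) (top_of_set (snd c ` fst c)) (snd c)"
    using assms unfolding riemann_surface_def c by auto
  show "fst c \<subseteq> topspace X" using \<open>openin X (fst c)\<close> by (rule openin_subset)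
  then show "inj_on (snd c) (fst c)"
    using homeomorphic_imp_injective_map[OF hom] by (simp add: Int_absorb1)
qed

lemma riemann_surface_cover:
  "riemann_surface X A \<Longrightarrow> p \<in> topspace X \<Longrightarrow> \<exists>c\<in>A. p \<in> fst c"
  unfolding riemann_surface_def by blast

lemma riemann_surface_chart_inverse:
  "riemann_surface X A \<Longrightarrow> c \<in> A \<Longrightarrow> p \<in> fst c \<Longrightarrow> inv_into (fst c) (snd c) (snd c p) = p"
  using riemann_surface_chartD(4) by (metis inv_into_f_f)

lemma openin_chart_preimage:
  assumes "riemann_surface X A" "c \<in> A" "continuous_on (snd c ` fst c) g" "open W"
  shows "openin X {x \<in> fst c. g (snd c x) \<in> W}"
proof -
  have "continuous_map (subtopology X (fst c)) euclidean (g \<circ> snd c)"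
    using homeomorphic_imp_continuous_map[OF riemann_surface_chartD(3)[OF assms(1,2)]] assms(3)
    by (intro continuous_map_compose) (auto simp: continuous_map_iff_continuous)
  moreover have "openin euclidean W" using assms(4) by simp
  ultimately have "openin (subtopology X (fst c)) {x \<in> topspace (subtopology X (fst c)). (g \<circ> snd c) x \<in> W}"
    by (rule openin_continuous_map_preimage)
  moreover have "{x \<in> topspace (subtopology X (fst c)). (g \<circ> snd c) x \<in> W} = {x \<in> fst c. g (snd c x) \<in> W}"
    using riemann_surface_chartD(5)[OF assms(1,2)] by auto
  ultimately show ?thesis
    using openin_trans_full riemann_surface_chartD(1)[OF assms(1,2)] by metis
qed

lemma Ck2_imp_continuous_on: "Ck 2 S f \<Longrightarrow> continuous_on S f"
  by (auto simp: numeral_2_eq_2 intro!: continuous_at_imp_continuous_on differentiable_imp_continuous_within)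

lemma holo_cubic_diff_scale:
  "holo_cubic_diff A U \<Longrightarrow> holo_cubic_diff A (\<lambda>c z. k * U c z)"
  unfolding holo_cubic_diff_def by (auto intro: holomorphic_intros)

lemma cubic_norm2_chart_independent:
  assumes RS: "riemann_surface X A" and "conformal_metric A rho" "holo_cubic_diff A U"
    and "c \<in> A" "d \<in> A" "p \<in> fst c" "p \<in> fst d"
  shows "cubic_norm2 rho U c (snd c p) = cubic_norm2 rho U d (snd d p)"
proof -
  define z where "z = snd c p"
  define T where "T = transition c d"
  have "z \<in> snd c ` (fst c \<inter> fst d)" using assms(6,7) by (simp add: z_def)
  then have rho: "rho c z = rho d (T z) * (cmod (deriv T z))\<^sup>2"
    and U: "U c z = U d (T z) * deriv T z ^ 3"
    using assms(2-5) unfolding conformal_metric_def holo_cubic_diff_def T_def by blast+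
  have "T z = snd d p"
    using riemann_surface_chart_inverse[OF RS \<open>c \<in> A\<close> \<open>p \<in> fst c\<close>] by (simp add: T_def z_def transition_def)
  have "rho c z > 0" using assms(2,4,6) unfolding conformal_metric_def z_def by blast
  then have "deriv T z \<noteq> 0" using rho by auto
  then have "cubic_norm2 rho U c z = cubic_norm2 rho U d (T z)"
    by (simp add: cubic_norm2_def rho U norm_mult norm_power power_mult_distrib
        flip: power_mult)
  then show ?thesis using \<open>T z = snd d p\<close> by (simp add: z_def)
qed

text \<open>In the chart c, e^u h = exp (chart_log_density rho u c z) |dz|^2.\<close>

definition chart_log_density :: "('a chart \<Rightarrow> complex \<Rightarrow> real) \<Rightarrow> ('a \<Rightarrow> real) \<Rightarrow> 'a chart \<Rightarrow> complex \<Rightarrow> real" where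
  "chart_log_density rho u c z = u (inv_into (fst c) (snd c) z) + ln (rho c z)"

lemma cubic_norm2_exp_eq_flat:
  assumes "riemann_surface X A" "conformal_metric A rho" "c \<in> A" "p \<in> fst c"
  shows "cubic_norm2 rho U c (snd c p) * exp (- 3 * u p)
         = flat_cubic_norm2 (chart_log_density rho u c) (U c) (snd c p)"
proof -
  have "rho c (snd c p) > 0" using assms(2-4) unfolding conformal_metric_def by blast
  then show ?thesis
    using riemann_surface_chart_inverse[OF assms(1,3,4)]
    by (simp add: cubic_norm2_def flat_cubic_norm2_eq chart_log_density_def exp_add exp_minus
        power_mult_distrib field_simps flip: exp_of_nat_mult)
qed

lemma solves_eq_chart_lap0:
  assumes "riemann_surface X A" "conformal_metric A rho" "solves_eq A rho U u" "c \<in> A"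
    and "z \<in> snd c ` fst c"
  shows "lap0 (u \<circ> inv_into (fst c) (snd c)) z + lap0 (\<lambda>s. ln (rho c s)) z
         = 2 * exp (chart_log_density rho u c z)
           - 4 * (cmod (U c z))\<^sup>2 * exp (- 2 * chart_log_density rho u c z)"
proof -
  obtain p where p: "p \<in> fst c" "z = snd c p" using assms(5) by blast
  have inv: "inv_into (fst c) (snd c) z = p" using riemann_surface_chart_inverse[OF assms(1,4) p(1)] p(2) by simp
  have "rho c z > 0" using assms(2,4,5) unfolding conformal_metric_def by blast
  have "lap0 (u \<circ> inv_into (fst c) (snd c)) z / rho c z
          + 4 * exp (- 2 * u p) * ((cmod (U c z))\<^sup>2 / rho c z ^ 3) - 2 * exp (u p)
          + lap0 (\<lambda>s. ln (rho c s)) z / rho c z = 0"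
    using assms(3,4) p unfolding solves_eq_def laplacian_def gauss_curvature_def cubic_norm2_def Let_def
    by auto
  moreover have "exp (chart_log_density rho u c z) = exp (u p) * rho c z"
    using \<open>rho c z > 0\<close> by (simp add: chart_log_density_def inv exp_add)
  moreover have exp_minus_2: "exp (- 2 * x) = 1 / exp x ^ 2" for x :: real
    by (simp add: exp_minus field_simps flip: exp_of_nat_mult)
  ultimately show ?thesis using \<open>rho c z > 0\<close>
    unfolding exp_minus_2 by (simp add: field_simps power2_eq_square power3_eq_cube)
qed

lemma wang_solution_chart:
  assumes RS: "riemann_surface X A" and CM: "conformal_metric A rho" and HC: "holo_cubic_diff A U"
    and sol: "solves_eq A rho U u" and "c \<in> A"
  shows "wang_solution (snd c ` fst c) (chart_log_density rho u c) (U c)"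
proof (rule wang_solution.intro)
  let ?S = "snd c ` fst c" and ?f = "u \<circ> inv_into (fst c) (snd c)"
  have f: "Ck 2 ?S ?f"
    using sol \<open>c \<in> A\<close> unfolding solves_eq_def smooth_fun_def smooth_on_def by blast
  have rho: "Ck 2 ?S (rho c)" "\<And>z. z \<in> ?S \<Longrightarrow> rho c z > 0"
    using CM \<open>c \<in> A\<close> unfolding conformal_metric_def smooth_on_def by blast+
  have \<psi>: "chart_log_density rho u c = (\<lambda>s. ?f s + ln (rho c s))"
    by (simp add: fun_eq_iff chart_log_density_def)
  show "open ?S" by (rule riemann_surface_chartD(2)[OF RS \<open>c \<in> A\<close>])
  have "\<forall>z\<in>?S. rho c z \<noteq> 0" using rho(2) by force
  then show "continuous_on ?S (chart_log_density rho u c)"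
    unfolding \<psi> using Ck2_imp_continuous_on[OF f] Ck2_imp_continuous_on[OF rho(1)]
    by (intro continuous_intros continuous_on_ln) auto
  show "U c holomorphic_on ?S" using HC \<open>c \<in> A\<close> unfolding holo_cubic_diff_def by blast
  fix z assume "z \<in> ?S"
  have "has_flat_laplacian (chart_log_density rho u c) (lap0 ?f z + lap0 (\<lambda>s. ln (rho c s)) z) z"
    unfolding \<psi> using \<open>open ?S\<close> \<open>z \<in> ?S\<close>
    by (intro has_flat_laplacian_add Ck2_has_flat_laplacian[OF f] Ck2_has_flat_laplacian_ln[OF rho(1)] rho(2))
  then show "has_flat_laplacian (chart_log_density rho u c)
      (2 * exp (chart_log_density rho u c z) - 4 * (cmod (U c z))\<^sup>2 * exp (- 2 * chart_log_density rho u c z)) z"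
    using solves_eq_chart_lap0[OF RS CM sol \<open>c \<in> A\<close> \<open>z \<in> ?S\<close>] by simp
qed

text \<open>||U||^2 e^(-3u) as a function on the surface, read off in some chart at p; the choice of chart
  is immaterial by cubic_norm2_chart_independent.\<close>

definition conformal_cubic_norm2 ::
  "'a chart set \<Rightarrow> ('a chart \<Rightarrow> complex \<Rightarrow> real) \<Rightarrow> ('a chart \<Rightarrow> complex \<Rightarrow> complex) \<Rightarrow> ('a \<Rightarrow> real) \<Rightarrow> 'a \<Rightarrow> real"
where
  "conformal_cubic_norm2 A rho U u p =
     (let c = SOME c. c \<in> A \<and> p \<in> fst c in cubic_norm2 rho U c (snd c p) * exp (- 3 * u p))"

lemma conformal_cubic_norm2_eq:
  assumes "riemann_surface X A" "conformal_metric A rho" "holo_cubic_diff A U" "c \<in> A" "p \<in> fst c"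
  shows "conformal_cubic_norm2 A rho U u p = cubic_norm2 rho U c (snd c p) * exp (- 3 * u p)"
proof -
  define d where "d = (SOME c. c \<in> A \<and> p \<in> fst c)"
  have "\<exists>c. c \<in> A \<and> p \<in> fst c" using assms(4,5) by blast
  then have "d \<in> A \<and> p \<in> fst d" unfolding d_def by (rule someI_ex)
  have "conformal_cubic_norm2 A rho U u p = cubic_norm2 rho U d (snd d p) * exp (- 3 * u p)"
    unfolding conformal_cubic_norm2_def Let_def d_def ..
  also have "\<dots> = cubic_norm2 rho U c (snd c p) * exp (- 3 * u p)"
    using cubic_norm2_chart_independent[OF assms(1-3)] \<open>d \<in> A \<and> p \<in> fst d\<close> assms(4,5) by metis
  finally show ?thesis .
qed

lemma conformal_cubic_norm2_eq_flat:
  assumes "riemann_surface X A" "conformal_metric A rho" "holo_cubic_diff A U" "c \<in> A" "p \<in> fst c"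
  shows "conformal_cubic_norm2 A rho U u p = flat_cubic_norm2 (chart_log_density rho u c) (U c) (snd c p)"
  unfolding conformal_cubic_norm2_eq[OF assms] by (rule cubic_norm2_exp_eq_flat[OF assms(1,2,4,5)])

lemma continuous_map_conformal_cubic_norm2:
  assumes RS: "riemann_surface X A" and CM: "conformal_metric A rho" and HC: "holo_cubic_diff A U"
    and sol: "solves_eq A rho U u"
  shows "continuous_map X euclideanreal (conformal_cubic_norm2 A rho U u)"
  unfolding continuous_map_openin_preimage_eq
proof (intro conjI allI impI)
  fix W :: "real set" assume "openin euclideanreal W"
  define N where "N c = flat_cubic_norm2 (chart_log_density rho u c) (U c)" for c
  have N: "conformal_cubic_norm2 A rho U u x = N c (snd c x)" if "c \<in> A" "x \<in> fst c" for c x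
    unfolding N_def using conformal_cubic_norm2_eq_flat[OF RS CM HC that] .
  have preimage: "topspace X \<inter> conformal_cubic_norm2 A rho U u -` W = (\<Union>c\<in>A. {x \<in> fst c. N c (snd c x) \<in> W})"
  proof (intro equalityI subsetI)
    fix x assume x: "x \<in> topspace X \<inter> conformal_cubic_norm2 A rho U u -` W"
    then obtain c where "c \<in> A" "x \<in> fst c" using riemann_surface_cover[OF RS] by blast
    moreover have "N c (snd c x) \<in> W" using x N[OF \<open>c \<in> A\<close> \<open>x \<in> fst c\<close>] by simp
    ultimately show "x \<in> (\<Union>c\<in>A. {x \<in> fst c. N c (snd c x) \<in> W})" by blast
  next
    fix x assume "x \<in> (\<Union>c\<in>A. {x \<in> fst c. N c (snd c x) \<in> W})"
    then obtain c where "c \<in> A" "x \<in> fst c" "N c (snd c x) \<in> W" by blast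
    moreover have "x \<in> topspace X" using riemann_surface_chartD(5)[OF RS] \<open>c \<in> A\<close> \<open>x \<in> fst c\<close> by blast
    ultimately show "x \<in> topspace X \<inter> conformal_cubic_norm2 A rho U u -` W"
      using N[OF \<open>c \<in> A\<close> \<open>x \<in> fst c\<close>] by simp
  qed
  have "openin X {x \<in> fst c. N c (snd c x) \<in> W}" if "c \<in> A" for c
  proof (rule openin_chart_preimage[OF RS that])
    show "continuous_on (snd c ` fst c) (N c)"
      unfolding N_def using wang_solution_chart[OF RS CM HC sol that]
      by (rule wang_solution.continuous_on_flat_cubic_norm2)
  qed (use \<open>openin euclideanreal W\<close> in simp)
  then show "openin X (topspace X \<inter> conformal_cubic_norm2 A rho U u -` W)"
    unfolding preimage by (intro openin_Union) blast
qed auto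

lemma conformal_cubic_norm2_le_half:
  assumes RS: "riemann_surface X A" and CM: "conformal_metric A rho" and HC: "holo_cubic_diff A U"
    and sol: "solves_eq A rho U u" and "p \<in> topspace X"
  shows "conformal_cubic_norm2 A rho U u p \<le> 1 / 2"
proof -
  let ?N = "conformal_cubic_norm2 A rho U u"
  have "compact_space X" using RS by (simp add: riemann_surface_def)
  then have "compactin euclideanreal (?N ` topspace X)"
    unfolding compact_space_def
    by (rule image_compactin[OF _ continuous_map_conformal_cubic_norm2[OF RS CM HC sol]])
  moreover have "?N ` topspace X \<noteq> {}" using \<open>p \<in> topspace X\<close> by blast
  ultimately obtain y where "y \<in> ?N ` topspace X" and y: "\<And>t. t \<in> ?N ` topspace X \<Longrightarrow> t \<le> y"
    using compact_attains_sup[of "?N ` topspace X"] by auto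
  then obtain pm where "pm \<in> topspace X" and max: "\<And>q. q \<in> topspace X \<Longrightarrow> ?N q \<le> ?N pm"
    by blast
  obtain d where "d \<in> A" "pm \<in> fst d" using riemann_surface_cover[OF RS \<open>pm \<in> topspace X\<close>] by blast
  interpret wang_solution "snd d ` fst d" "chart_log_density rho u d" "U d"
    by (rule wang_solution_chart[OF RS CM HC sol \<open>d \<in> A\<close>])
  have N_pm: "?N pm = flat_cubic_norm2 (chart_log_density rho u d) (U d) (snd d pm)"
    by (rule conformal_cubic_norm2_eq_flat[OF RS CM HC \<open>d \<in> A\<close> \<open>pm \<in> fst d\<close>])
  have "?N p \<le> ?N pm" by (rule max[OF \<open>p \<in> topspace X\<close>])
  also have "\<dots> \<le> 1 / 2"
    unfolding N_pm
  proof (rule flat_cubic_norm2_le_half_at_max)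
    show "snd d pm \<in> snd d ` fst d" using \<open>pm \<in> fst d\<close> by simp
    fix s assume "s \<in> snd d ` fst d"
    then obtain q where q: "q \<in> fst d" "s = snd d q" by blast
    then have "q \<in> topspace X" using riemann_surface_chartD(5)[OF RS \<open>d \<in> A\<close>] by blast
    have "flat_cubic_norm2 (chart_log_density rho u d) (U d) s = ?N q"
      unfolding q(2) by (rule conformal_cubic_norm2_eq_flat[OF RS CM HC \<open>d \<in> A\<close> q(1), symmetric])
    also have "\<dots> \<le> ?N pm" by (rule max[OF \<open>q \<in> topspace X\<close>])
    finally show "flat_cubic_norm2 (chart_log_density rho u d) (U d) s
                  \<le> flat_cubic_norm2 (chart_log_density rho u d) (U d) (snd d pm)"
      unfolding N_pm .
  qed
  finally show ?thesis .
qed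

lemma compactin_uniform_bound:
  fixes P :: "'a \<Rightarrow> real \<Rightarrow> bool"
  assumes "compactin X K"
    and local: "\<And>p. p \<in> K \<Longrightarrow> \<exists>W C. openin X W \<and> p \<in> W \<and> (\<forall>q\<in>W. P q C)"
    and mono: "\<And>q C C'. P q C \<Longrightarrow> C \<le> C' \<Longrightarrow> P q C'"
  shows "\<exists>C. \<forall>q\<in>K. P q C"
proof -
  obtain W C where W: "\<And>p. p \<in> K \<Longrightarrow> openin X (W p) \<and> p \<in> W p \<and> (\<forall>q\<in>W p. P q (C p))"
    using local by metis
  then obtain F where "finite F" "F \<subseteq> W ` K" "K \<subseteq> \<Union>F"
    using assms(1) unfolding compactin_def by (metis (no_types, lifting) UN_I imageE subsetI)
  then obtain K' where "K' \<subseteq> K" "finite K'" "K \<subseteq> (\<Union>p\<in>K'. W p)"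
    by (metis finite_subset_image)
  show ?thesis
  proof (intro exI ballI)
    fix q assume "q \<in> K"
    then obtain p where "p \<in> K'" "q \<in> W p" using \<open>K \<subseteq> (\<Union>p\<in>K'. W p)\<close> by blast
    then have "P q (C p)" using W \<open>K' \<subseteq> K\<close> by blast
    then show "P q (Max (C ` K'))" using \<open>finite K'\<close> \<open>p \<in> K'\<close> by (auto intro: mono)
  qed
qed

lemma conformal_cubic_norm2_lower_bound_chart:
  assumes RS: "riemann_surface X A" and CM: "conformal_metric A rho" and HC: "holo_cubic_diff A U0"
    and "d \<in> A" "q \<in> fst d" "R > 0" "m > 0" "cball (snd d q) R \<subseteq> snd d ` fst d"
    and m: "\<And>s. s \<in> cball (snd d q) R \<Longrightarrow> m \<le> cmod (U0 d s)"
    and "lam > 0" and sol: "solves_eq A rho (\<lambda>c z. of_real lam * U0 c z) u"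
  shows "1 / 2 - 6 / (m powr (2 / 3) * R\<^sup>2) * lam powr (- 2 / 3)
         \<le> conformal_cubic_norm2 A rho (\<lambda>c z. of_real lam * U0 c z) u q"
proof -
  interpret wang_solution "snd d ` fst d" "chart_log_density rho u d" "\<lambda>z. of_real lam * U0 d z"
    using wang_solution_chart[OF RS CM holo_cubic_diff_scale[OF HC] sol \<open>d \<in> A\<close>] by simp
  have "1 / 2 - 6 / ((lam * m) powr (2 / 3) * R\<^sup>2)
        \<le> flat_cubic_norm2 (chart_log_density rho u d) (\<lambda>z. of_real lam * U0 d z) (snd d q)"
    using assms(6-8) m \<open>lam > 0\<close>
    by (intro flat_cubic_norm2_lower_bound) (auto simp: norm_mult)
  moreover have "6 / ((lam * m) powr (2 / 3) * R\<^sup>2) = 6 / (m powr (2 / 3) * R\<^sup>2) * lam powr (- 2 / 3)"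
    using \<open>lam > 0\<close> \<open>m > 0\<close> by (simp add: powr_mult powr_minus_divide)
  moreover have "conformal_cubic_norm2 A rho (\<lambda>c z. of_real lam * U0 c z) u q
      = flat_cubic_norm2 (chart_log_density rho u d) (\<lambda>z. of_real lam * U0 d z) (snd d q)"
    using conformal_cubic_norm2_eq_flat[OF RS CM holo_cubic_diff_scale[OF HC] \<open>d \<in> A\<close> \<open>q \<in> fst d\<close>]
    by simp
  ultimately show ?thesis by simp
qed

lemma conformal_cubic_norm2_lower_bound_near:
  assumes RS: "riemann_surface X A" and CM: "conformal_metric A rho" and HC: "holo_cubic_diff A U0"
    and "d \<in> A" "p \<in> fst d" "U0 d (snd d p) \<noteq> 0"
  shows "\<exists>W C. openin X W \<and> p \<in> W \<and>
           (\<forall>q\<in>W. \<forall>lam u. lam > 0 \<longrightarrow> solves_eq A rho (\<lambda>c z. of_real lam * U0 c z) u \<longrightarrow>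
              1 / 2 - C * lam powr (- 2 / 3) \<le> conformal_cubic_norm2 A rho (\<lambda>c z. of_real lam * U0 c z) u q)"
proof -
  let ?S = "snd d ` fst d"
  define z where "z = snd d p"
  have "open ?S" "z \<in> ?S" using riemann_surface_chartD(2)[OF RS \<open>d \<in> A\<close>] \<open>p \<in> fst d\<close> by (auto simp: z_def)
  moreover have "continuous_on ?S (U0 d)"
    using HC \<open>d \<in> A\<close> holomorphic_on_imp_continuous_on unfolding holo_cubic_diff_def by blast
  ultimately obtain r where "r > 0" "cball z r \<subseteq> ?S"
    and r: "\<And>s. s \<in> cball z r \<Longrightarrow> cmod (U0 d z) / 2 \<le> cmod (U0 d s)"
    using continuous_on_norm_lower_bound_cball \<open>U0 d (snd d p) \<noteq> 0\<close> unfolding z_def by metis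
  define W where "W = {x \<in> fst d. snd d x \<in> ball z (r / 2)}"
  show ?thesis
  proof (intro exI[of _ W] exI[of _ "6 / ((cmod (U0 d z) / 2) powr (2 / 3) * (r / 2)\<^sup>2)"] conjI ballI allI impI)
    show "openin X W"
      unfolding W_def by (rule openin_chart_preimage[OF RS \<open>d \<in> A\<close> continuous_on_id open_ball])
    show "p \<in> W" using \<open>r > 0\<close> \<open>p \<in> fst d\<close> by (simp add: W_def z_def)
    fix q lam u assume "q \<in> W" "lam > 0" and sol: "solves_eq A rho (\<lambda>c z. of_real lam * U0 c z) u"
    then have "q \<in> fst d" "dist z (snd d q) < r / 2" by (auto simp: W_def)
    have "cball (snd d q) (r / 2) \<subseteq> cball z r"
    proof
      fix t assume "t \<in> cball (snd d q) (r / 2)"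
      moreover have "dist z t \<le> dist z (snd d q) + dist (snd d q) t" by (rule dist_triangle)
      ultimately show "t \<in> cball z r" using \<open>dist z (snd d q) < r / 2\<close> by simp
    qed
    then show "1 / 2 - 6 / ((cmod (U0 d z) / 2) powr (2 / 3) * (r / 2)\<^sup>2) * lam powr (- 2 / 3)
        \<le> conformal_cubic_norm2 A rho (\<lambda>c z. of_real lam * U0 c z) u q"
      using \<open>cball z r \<subseteq> ?S\<close> r \<open>r > 0\<close> \<open>U0 d (snd d p) \<noteq> 0\<close> \<open>lam > 0\<close>
      by (intro conformal_cubic_norm2_lower_bound_chart[OF RS CM HC \<open>d \<in> A\<close> \<open>q \<in> fst d\<close> _ _ _ _ _ sol])
         (auto simp: z_def)
  qed
qed

lemma conformal_cubic_norm2_lower_bound_compact: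
  assumes RS: "riemann_surface X A" and CM: "conformal_metric A rho" and HC: "holo_cubic_diff A U0"
    and "compactin X K" and nonzero: "\<forall>c\<in>A. \<forall>p\<in>K \<inter> fst c. U0 c (snd c p) \<noteq> 0"
  shows "\<exists>C. \<forall>q\<in>K. \<forall>lam u. lam > 0 \<longrightarrow> solves_eq A rho (\<lambda>c z. of_real lam * U0 c z) u \<longrightarrow>
           1 / 2 - C * lam powr (- 2 / 3) \<le> conformal_cubic_norm2 A rho (\<lambda>c z. of_real lam * U0 c z) u q"
proof (rule compactin_uniform_bound[OF \<open>compactin X K\<close>])
  fix p assume "p \<in> K"
  then obtain d where "d \<in> A" "p \<in> fst d"
    using riemann_surface_cover[OF RS] compactin_subset_topspace[OF \<open>compactin X K\<close>] by blast
  with nonzero \<open>p \<in> K\<close> show "\<exists>W C. openin X W \<and> p \<in> W \<and> (\<forall>q\<in>W. \<forall>lam u. lam > 0 \<longrightarrow>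
      solves_eq A rho (\<lambda>c z. of_real lam * U0 c z) u \<longrightarrow>
      1 / 2 - C * lam powr (- 2 / 3) \<le> conformal_cubic_norm2 A rho (\<lambda>c z. of_real lam * U0 c z) u q)"
    by (intro conformal_cubic_norm2_lower_bound_near[OF RS CM HC]) auto
next
  fix q and C C' :: real
  assume "\<forall>lam u. lam > 0 \<longrightarrow> solves_eq A rho (\<lambda>c z. of_real lam * U0 c z) u \<longrightarrow>
            1 / 2 - C * lam powr (- 2 / 3) \<le> conformal_cubic_norm2 A rho (\<lambda>c z. of_real lam * U0 c z) u q"
    and "C \<le> C'"
  moreover have "C * lam powr (- 2 / 3) \<le> C' * lam powr (- 2 / 3)" for lam :: real
    using \<open>C \<le> C'\<close> by (simp add: mult_right_mono)
  ultimately show "\<forall>lam u. lam > 0 \<longrightarrow> solves_eq A rho (\<lambda>c z. of_real lam * U0 c z) u \<longrightarrow>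
            1 / 2 - C' * lam powr (- 2 / 3) \<le> conformal_cubic_norm2 A rho (\<lambda>c z. of_real lam * U0 c z) u q"
    by (meson diff_left_mono order_trans)
qed

theorem proposition4:
  fixes X :: "'a topology" and A :: "'a chart set"
    and rho :: "'a chart \<Rightarrow> complex \<Rightarrow> real" and U0 :: "'a chart \<Rightarrow> complex \<Rightarrow> complex"
    and g :: nat and K :: "'a set"
  assumes "riemann_surface X A" and "has_genus X g" and "g > 1"
    and "conformal_metric A rho"
    and "holo_cubic_diff A U0"
    and "\<exists>c\<in>A. \<exists>p\<in>fst c. U0 c (snd c p) \<noteq> 0"
    and "compactin X K"
    and "\<forall>c\<in>A. \<forall>p\<in>K \<inter> fst c. U0 c (snd c p) \<noteq> 0"
  shows "\<exists>C::real. \<forall>lam::real. \<forall>u. lam > 0 \<longrightarrow>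
           solves_eq A rho (\<lambda>c z. complex_of_real lam * U0 c z) u \<longrightarrow>
           (\<forall>c\<in>A. \<forall>p\<in>K \<inter> fst c.
              let N = cubic_norm2 rho (\<lambda>c z. complex_of_real lam * U0 c z) c (snd c p) * exp (-3 * u p)
              in 1/2 \<ge> N \<and> N \<ge> 1/2 - C * lam powr (-2/3))"
proof -
  \<comment> \<open>The genus and the non-vanishing of U0 only matter for the existence of u, which is assumed here.\<close>
  note RS = assms(1) and CM = assms(4) and HC = holo_cubic_diff_scale[OF assms(5)]
  obtain C where lower: "\<forall>q\<in>K. \<forall>lam u. lam > 0 \<longrightarrow> solves_eq A rho (\<lambda>c z. of_real lam * U0 c z) u \<longrightarrow>
      1 / 2 - C * lam powr (- 2 / 3) \<le> conformal_cubic_norm2 A rho (\<lambda>c z. of_real lam * U0 c z) u q"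
    using conformal_cubic_norm2_lower_bound_compact[OF RS CM assms(5,7,8)] by blast
  show ?thesis
  proof (intro exI[of _ C] allI impI ballI)
    fix lam :: real and u c p
    assume "lam > 0" and sol: "solves_eq A rho (\<lambda>c z. complex_of_real lam * U0 c z) u"
      and "c \<in> A" and p: "p \<in> K \<inter> fst c"
    then have "p \<in> topspace X" using riemann_surface_chartD(5)[OF RS] by blast
    have "cubic_norm2 rho (\<lambda>c z. complex_of_real lam * U0 c z) c (snd c p) * exp (- 3 * u p)
          = conformal_cubic_norm2 A rho (\<lambda>c z. of_real lam * U0 c z) u p"
      using conformal_cubic_norm2_eq[OF RS CM HC \<open>c \<in> A\<close>] p by simp
    then show "let N = cubic_norm2 rho (\<lambda>c z. complex_of_real lam * U0 c z) c (snd c p) * exp (-3 * u p)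
              in 1/2 \<ge> N \<and> N \<ge> 1/2 - C * lam powr (-2/3)"
      using conformal_cubic_norm2_le_half[OF RS CM HC sol \<open>p \<in> topspace X\<close>] lower \<open>lam > 0\<close> sol p
      by (simp add: Let_def)
  qed
qed

end
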